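(* For all $n\in\mathbb N$ the following hold in the $q$-shuffle algebra $\mathbb V$: $$G_n=q^{2n}D_n+q^2\sum_{\substack{i+j+k+1=n\\ i,j,k\ge0}}W_{-i}\star D_j\star W_{k+1},$$ $$G_n=q^{-2n}D_n+\sum_{\substack{i+j+k+1=n\\ i,j,k\ge0}}W_{k+1}\star D_j\star W_{-i}.$$
   Context: Let $\mathbb F$ be a field and let $q\in\mathbb F$ be nonzero and not a root of unity. Let $\mathbb V$ be the free associative $\mathbb F$-algebra on noncommuting $x,y$, with basis the words (including $1$). Juxtaposition denotes concatenation. Set $\langle x,x\rangle=\langle y,y\rangle=2$ and $\langle x,y\rangle=\langle y,x\rangle=-2$. The $q$-shuffle product $\star$ is the bilinear product determined as follows: - $1\star v=v\star 1=v$; - for nontrivial words $u=u_1\cdots u_r$ and $v=v_1\cdots v_s$, $$u\star v=u_1((u_2\cdots u_r)\star v)+v_1(u\star(v_2\cdots v_s))q^{\langle u_1,v_1\rangle+\cdots+\langle u_r,v_1\rangle}.$$ This makes $\mathbb V$ an associative algebra, the $q$-shuffle algebra. For $k\in\mathbb N$: - $W_{-k}=xyx\cdots x$ is the alternating word of length $2k+1$ beginning and ending with $x$; - $W_{k+1}=yxy\cdots y$ is the alternating word of length $2k+1$ beginning and ending with $y$; - $G_k=yxyx\cdots yx$ is the word of length $2k$; - $\tilde G_k=xyxy\cdots xy$ is the word of length $2k$; - $G_0=\tilde G_0=1$. Define $\{D_n\}_{n\in\mathbb N}\subseteq\mathbb V$ recursively by $D_0=1$ and, for $n\ge1$, $\sum_{i=0}^n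 D_i\star\tilde G_{n-i}=0$. *)

theory Defs
  imports Main "HOL-Library.Poly_Mapping"
begin

datatype letter = X | Y

type_synonym word = "letter list"

type_synonym 'a qvec = "word \<Rightarrow>\<^sub>0 'a"

definition wd :: "word \<Rightarrow> 'a::field qvec" where
  "wd w = Poly_Mapping.single w 1"

definition one_V :: "'a::field qvec" where
  "one_V = wd []"

definition sc :: "'a::field \<Rightarrow> 'a qvec \<Rightarrow> 'a qvec" where
  "sc c p = Poly_Mapping.map (\<lambda>t. c * t) p"

definition prep :: "letter \<Rightarrow> 'a::field qvec \<Rightarrow> 'a qvec" where
  "prep a p = (\<Sum>w\<in>Poly_Mapping.keys p. Poly_Mapping.single (a # w) (Poly_Mapping.lookup p w))"

definition bil :: "letter \<Rightarrow> letter \<Rightarrow> int" where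
  "bil a b = (if a = b then 2 else -2)"

fun qsh :: "'a::field \<Rightarrow> word \<Rightarrow> word \<Rightarrow> 'a qvec" where
  "qsh q [] v = wd v"
| "qsh q (a # u) [] = wd (a # u)"
| "qsh q (a # u) (b # v) =
     prep a (qsh q u (b # v))
     + sc (q powi (\<Sum>c\<leftarrow>a # u. bil c b)) (prep b (qsh q (a # u) v))"

definition qstar :: "'a::field \<Rightarrow> 'a qvec \<Rightarrow> 'a qvec \<Rightarrow> 'a qvec" where
  "qstar q f g = (\<Sum>u\<in>Poly_Mapping.keys f. \<Sum>v\<in>Poly_Mapping.keys g. sc (Poly_Mapping.lookup f u * Poly_Mapping.lookup g v) (qsh q u v))"

text \<open>Wneg k = W_{-k} = xyx...x of length 2k+1.\<close>
definition Wneg :: "nat \<Rightarrow> word" where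
  "Wneg k = map (\<lambda>i. if even i then X else Y) [0..<2*k+1]"

text \<open>Wpos k = W_{k+1} = yxy...y of length 2k+1.\<close>
definition Wpos :: "nat \<Rightarrow> word" where
  "Wpos k = map (\<lambda>i. if even i then Y else X) [0..<2*k+1]"

text \<open>Gw k = G_k = yxyx...yx of length 2k.\<close>
definition Gw :: "nat \<Rightarrow> word" where
  "Gw k = map (\<lambda>i. if even i then Y else X) [0..<2*k]"

text \<open>Gtw k = tilde G_k = xyxy...xy of length 2k.\<close>
definition Gtw :: "nat \<Rightarrow> word" where
  "Gtw k = map (\<lambda>i. if even i then X else Y) [0..<2*k]"

end

theory Submission
  imports Defs HOL.Vector_Spaces
begin

text \<open>
  Write \<open>\<partial>\<^sub>a\<close> (lderiv) for the removal of a leading letter a from words and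
  \<open>K\<^sub>a w = q\<^bsup>\<langle>w,a\<rangle>\<^esup> w\<close> (qweight). The q-shuffle product obeys the twisted
  Leibniz rule \<open>\<partial>\<^sub>a (u \<star> v) = \<partial>\<^sub>a u \<star> v + K\<^sub>a u \<star> \<partial>\<^sub>a v\<close>, and an element of V is
  determined by its constant term together with \<open>\<partial>\<^sub>X\<close> and \<open>\<partial>\<^sub>Y\<close>; induction on length
  then already gives associativity.

  In terms of generating functions in t with coefficients in V, the recursion for D says
  \<open>D(t) G~(t) = 1\<close>. Since \<open>\<partial>\<^sub>Y G~ = 0\<close> and \<open>\<partial>\<^sub>X G~ = t W\<^sub>+\<close>, this gives \<open>\<partial>\<^sub>Y D = 0\<close> and
  \<open>\<partial>\<^sub>X D = - t D W\<^sub>+ D\<close>. Comparing derivatives shows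
  \<open>G~(t) W\<^sub>+(q\<^sup>2 t) = W\<^sub>+(t) G~(q\<^sup>2 t)\<close>, hence \<open>D(t) W\<^sub>+(t) = W\<^sub>+(q\<^sup>2 t) D(q\<^sup>2 t)\<close>.
  With these rules, both sides of each claimed formula have the same constant terms and
  the same \<open>\<partial>\<^sub>Y\<close>, and their \<open>\<partial>\<^sub>X\<close> agree once the formula holds in all lower degrees;
  so the formulas follow by induction on n.
\<close>

section \<open>The vector space V\<close>

abbreviation coeff :: "'a::field qvec \<Rightarrow> word \<Rightarrow> 'a" where
  "coeff \<equiv> Poly_Mapping.lookup"

lemma coeff_sc [simp]: "coeff (sc c p) w = c * coeff p w"
  by (simp add: sc_def map.rep_eq when_def)

lemma coeff_wd: "coeff (wd u) w = (if u = w then 1 else 0)"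
  by (simp add: wd_def lookup_single when_def)

lemma coeff_one_V: "coeff one_V w = (if w = [] then 1 else 0)"
  by (simp add: one_V_def coeff_wd)

lemma keys_wd [simp]: "Poly_Mapping.keys (wd u :: 'a::field qvec) = {u}"
  by (simp add: wd_def)

global_interpretation qvec: vector_space "sc :: 'a::field \<Rightarrow> 'a qvec \<Rightarrow> 'a qvec"
  by unfold_locales (auto intro!: poly_mapping_eqI simp: lookup_add algebra_simps)

global_interpretation qvec: vector_space_pair
  "sc :: 'a::field \<Rightarrow> 'a qvec \<Rightarrow> 'a qvec" "sc :: 'a::field \<Rightarrow> 'a qvec \<Rightarrow> 'a qvec"
  by unfold_locales

abbreviation qlinear :: "('a::field qvec \<Rightarrow> 'a qvec) \<Rightarrow> bool" where
  "qlinear \<equiv> Vector_Spaces.linear sc sc"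

lemma qvec_eq_sum_words: "p = (\<Sum>w\<in>Poly_Mapping.keys p. sc (coeff p w) (wd w))"
proof (rule poly_mapping_eqI)
  fix v
  have "coeff (\<Sum>w\<in>Poly_Mapping.keys p. sc (coeff p w) (wd w)) v
      = (\<Sum>w\<in>Poly_Mapping.keys p. if w = v then coeff p w else 0)"
    by (simp add: lookup_sum coeff_wd if_distrib[of "\<lambda>t. _ * t"] cong: if_cong)
  also have "\<dots> = coeff p v"
    by (simp add: sum.delta' in_keys_iff)
  finally show "coeff p v = coeff (\<Sum>w\<in>Poly_Mapping.keys p. sc (coeff p w) (wd w)) v" ..
qed

lemma span_words: "p \<in> qvec.span (range wd)"
  by (subst qvec_eq_sum_words) (intro qvec.span_sum qvec.span_scale qvec.span_base rangeI)

lemma linear_qvecI: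
  assumes "\<And>x y. F (x + y) = F x + F y" and "\<And>c x. F (sc c x) = sc c (F x)"
  shows "qlinear F"
  using assms by (simp add: linear_iff qvec.vector_space_axioms)

lemma linear_eq_on_words:
  assumes "qlinear F" and "qlinear G" and "\<And>w. F (wd w) = G (wd w)"
  shows "F p = G p"
  using qvec.linear_eq_on[OF assms(1,2) span_words] assms(3) by blast

lemma bilinear_eq_on_words:
  assumes "\<And>Q. qlinear (\<lambda>P. F P Q)" and "\<And>P. qlinear (F P)"
    and "\<And>Q. qlinear (\<lambda>P. G P Q)" and "\<And>P. qlinear (G P)"
    and "\<And>u v. F (wd u) (wd v) = G (wd u) (wd v)"
  shows "F P Q = G P Q"
proof (rule linear_eq_on_words[where F="\<lambda>P. F P Q"])
  fix u
  show "F (wd u) Q = G (wd u) Q"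
    by (rule linear_eq_on_words[where F="F (wd u)"]) (fact assms)+
qed (fact assms)+

section \<open>Left derivatives and the q-shuffle product\<close>

definition lderiv :: "letter \<Rightarrow> 'a::field qvec \<Rightarrow> 'a qvec" where
  "lderiv a p = Abs_poly_mapping (\<lambda>w. coeff p (a # w))"

lemma coeff_lderiv [simp]: "coeff (lderiv a p) w = coeff p (a # w)"
proof -
  have "{w. coeff p (a # w) \<noteq> 0} \<subseteq> tl ` Poly_Mapping.keys p"
    by (auto simp: in_keys_iff image_iff intro!: bexI[where x="a # _"])
  then have "finite {w. coeff p (a # w) \<noteq> 0}"
    by (rule finite_subset) simp
  then show ?thesis by (simp add: lderiv_def)
qed

definition weight :: "word \<Rightarrow> letter \<Rightarrow> int" where
  "weight w b = (\<Sum>c\<leftarrow>w. bil c b)"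

lemma weight_Nil [simp]: "weight [] b = 0"
  by (simp add: weight_def)

lemma weight_Cons [simp]: "weight (c # w) b = bil c b + weight w b"
  by (simp add: weight_def)

definition qweight :: "'a::field \<Rightarrow> letter \<Rightarrow> 'a qvec \<Rightarrow> 'a qvec" where
  "qweight q a p = Abs_poly_mapping (\<lambda>w. q powi weight w a * coeff p w)"

lemma coeff_qweight [simp]: "coeff (qweight q a p) w = q powi weight w a * coeff p w"
proof -
  have "finite {w. q powi weight w a * coeff p w \<noteq> 0}"
    by (rule finite_subset[of _ "Poly_Mapping.keys p"]) (auto simp: in_keys_iff)
  then show ?thesis
    unfolding qweight_def by (subst lookup_Abs_poly_mapping) auto
qed

lemma linear_lderiv: "qlinear (lderiv a)"
  by (rule linear_qvecI; rule poly_mapping_eqI) (simp_all add: lookup_add)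

lemma linear_qweight: "qlinear (qweight q a)"
  by (rule linear_qvecI; rule poly_mapping_eqI) (simp_all add: lookup_add algebra_simps)

lemmas lderiv_add = qvec.linear_add[OF linear_lderiv]
  and lderiv_sc = qvec.linear_scale[OF linear_lderiv]
  and lderiv_diff = qvec.linear_diff[OF linear_lderiv]
  and lderiv_sum = qvec.linear_sum[OF linear_lderiv]
  and lderiv_zero [simp] = qvec.linear_0[OF linear_lderiv]

lemmas qweight_add = qvec.linear_add[OF linear_qweight]
  and qweight_sc = qvec.linear_scale[OF linear_qweight]
  and qweight_sum = qvec.linear_sum[OF linear_qweight]
  and qweight_zero [simp] = qvec.linear_0[OF linear_qweight]

lemma lderiv_wd_Nil [simp]: "lderiv a (wd []) = 0"
  by (rule poly_mapping_eqI) (simp add: coeff_wd)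

lemma lderiv_wd_Cons [simp]: "lderiv a (wd (b # w)) = sc (if b = a then 1 else 0) (wd w)"
  by (rule poly_mapping_eqI) (auto simp: coeff_wd)

lemma qweight_wd: "qweight q a (wd w) = sc (q powi weight w a) (wd w)"
  by (rule poly_mapping_eqI) (simp add: coeff_wd)

lemma qvec_eqI:
  assumes "coeff P [] = coeff Q []" and "\<And>a. lderiv a P = lderiv a Q"
  shows "P = Q"
proof (rule poly_mapping_eqI)
  fix w
  show "coeff P w = coeff Q w"
    using assms by (cases w) (simp, metis coeff_lderiv)
qed

lemma coeff_prep_Nil [simp]: "coeff (prep a p) [] = 0"
  by (simp add: prep_def lookup_sum lookup_single)

lemma coeff_prep_Cons [simp]: "coeff (prep a p) (b # w) = (if b = a then coeff p w else 0)"
proof -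
  have "coeff (prep a p) (b # w) = (\<Sum>v\<in>Poly_Mapping.keys p. if b = a \<and> v = w then coeff p v else 0)"
    by (auto simp: prep_def lookup_sum lookup_single when_def intro!: sum.cong)
  also have "\<dots> = (if b = a then coeff p w else 0)"
    by (auto simp: sum.delta' in_keys_iff)
  finally show ?thesis .
qed

lemma lderiv_prep: "lderiv a (prep b p) = (if b = a then p else 0)"
  by (rule poly_mapping_eqI) simp

lemma prep_sc: "prep b (sc c x) = sc c (prep b x)"
  by (rule qvec_eqI) (simp_all add: lderiv_prep lderiv_sc)

lemma qweight_prep:
  assumes "q \<noteq> 0"
  shows "qweight q a (prep b p) = sc (q powi bil b a) (prep b (qweight q a p))"
  by (rule qvec_eqI) (auto simp: lderiv_prep lderiv_sc power_int_add assms intro!: poly_mapping_eqI)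

lemma qsh_Nil_right [simp]: "qsh q u [] = wd u"
  by (cases u) simp_all

lemma qsh_Cons_Cons: "qsh q (a # u) (b # v) =
     prep a (qsh q u (b # v)) + sc (q powi weight (a # u) b) (prep b (qsh q (a # u) v))"
  by (simp only: qsh.simps weight_def)

declare qsh.simps(3) [simp del]

lemma coeff_qsh_Nil: "coeff (qsh q u v) [] = (if u = [] \<and> v = [] then 1 else 0)"
  by (cases u; cases v) (simp_all add: coeff_wd qsh_Cons_Cons lookup_add)

lemma qweight_qsh:
  assumes "q \<noteq> 0"
  shows "qweight q a (qsh q u v) = sc (q powi (weight u a + weight v a)) (qsh q u v)"
  using assms
proof (induction q u v rule: qsh.induct)
  case (3 q c u b v)
  then show ?case
    by (simp add: qsh_Cons_Cons qweight_add qweight_sc qweight_prep prep_sc qvec.scale_right_distrib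
        power_int_add mult_ac del: weight_Cons)
       (simp add: power_int_add mult_ac)
qed (simp_all add: qweight_wd)

lemma qstar_eq_sum_superset:
  assumes "finite A" "Poly_Mapping.keys f \<subseteq> A" "finite B" "Poly_Mapping.keys g \<subseteq> B"
  shows "qstar q f g = (\<Sum>u\<in>A. \<Sum>v\<in>B. sc (coeff f u * coeff g v) (qsh q u v))"
proof -
  have "qstar q f g = (\<Sum>u\<in>Poly_Mapping.keys f. \<Sum>v\<in>B. sc (coeff f u * coeff g v) (qsh q u v))"
    unfolding qstar_def
    by (intro sum.cong refl sum.mono_neutral_left assms) (auto simp: in_keys_iff)
  also have "\<dots> = (\<Sum>u\<in>A. \<Sum>v\<in>B. sc (coeff f u * coeff g v) (qsh q u v))"
    by (intro sum.mono_neutral_left assms) (auto simp: in_keys_iff)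
  finally show ?thesis .
qed

lemma qstar_add_left: "qstar q (x + y) z = qstar q x z + qstar q y z"
proof -
  let ?A = "Poly_Mapping.keys x \<union> Poly_Mapping.keys y"
  have "Poly_Mapping.keys (x + y) \<subseteq> ?A"
    by (rule keys_add)
  then show ?thesis
    by (subst (1 2 3) qstar_eq_sum_superset[where A = ?A and B = "Poly_Mapping.keys z"])
       (auto simp: lookup_add algebra_simps qvec.scale_left_distrib sum.distrib)
qed

lemma qstar_add_right: "qstar q z (x + y) = qstar q z x + qstar q z y"
proof -
  let ?B = "Poly_Mapping.keys x \<union> Poly_Mapping.keys y"
  have "Poly_Mapping.keys (x + y) \<subseteq> ?B"
    by (rule keys_add)
  then show ?thesis
    by (subst (1 2 3) qstar_eq_sum_superset[where A = "Poly_Mapping.keys z" and B = ?B])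
       (auto simp: lookup_add algebra_simps qvec.scale_left_distrib sum.distrib)
qed

lemma keys_sc_subset: "Poly_Mapping.keys (sc c x) \<subseteq> Poly_Mapping.keys x"
  by (auto simp: in_keys_iff)

lemma qstar_sc_left: "qstar q (sc c x) z = sc c (qstar q x z)"
  by (subst (1 2) qstar_eq_sum_superset[where A = "Poly_Mapping.keys x" and B = "Poly_Mapping.keys z"])
     (use keys_sc_subset in \<open>auto simp: qvec.scale_sum_right mult.assoc\<close>)

lemma qstar_sc_right: "qstar q z (sc c x) = sc c (qstar q z x)"
  by (subst (1 2) qstar_eq_sum_superset[where A = "Poly_Mapping.keys z" and B = "Poly_Mapping.keys x"])
     (use keys_sc_subset in \<open>auto simp: qvec.scale_sum_right algebra_simps\<close>)

lemma linear_qstar_left: "qlinear (\<lambda>P. qstar q P Q)"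
  by (rule linear_qvecI) (simp_all add: qstar_add_left qstar_sc_left)

lemma linear_qstar_right: "qlinear (qstar q P)"
  by (rule linear_qvecI) (simp_all add: qstar_add_right qstar_sc_right)

lemmas qstar_sum_left = qvec.linear_sum[OF linear_qstar_left]
  and qstar_sum_right = qvec.linear_sum[OF linear_qstar_right]
  and qstar_uminus_left = qvec.linear_neg[OF linear_qstar_left]
  and qstar_uminus_right = qvec.linear_neg[OF linear_qstar_right]
  and qstar_diff_left = qvec.linear_diff[OF linear_qstar_left]
  and qstar_diff_right = qvec.linear_diff[OF linear_qstar_right]
  and qstar_zero_left [simp] = qvec.linear_0[OF linear_qstar_left]
  and qstar_zero_right [simp] = qvec.linear_0[OF linear_qstar_right]

lemma qstar_wd: "qstar q (wd u) (wd v) = qsh q u v"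
  by (simp add: qstar_def coeff_wd)

lemma qstar_one_left [simp]: "qstar q one_V P = P"
  unfolding one_V_def
  by (rule linear_eq_on_words[OF linear_qstar_right linear_qvecI]) (simp_all add: qstar_wd)

lemma qstar_one_right [simp]: "qstar q P one_V = P"
  unfolding one_V_def
  by (rule linear_eq_on_words[OF linear_qstar_left linear_qvecI]) (simp_all add: qstar_wd)

lemma coeff_qstar_Nil: "coeff (qstar q P Q) [] = coeff P [] * coeff Q []"
proof -
  have "coeff (qstar q P Q) [] = (\<Sum>u\<in>Poly_Mapping.keys P. if u = [] then coeff P u else 0)
      * (\<Sum>v\<in>Poly_Mapping.keys Q. if v = [] then coeff Q v else 0)"
    unfolding sum_product by (auto simp: qstar_def lookup_sum coeff_qsh_Nil intro!: sum.cong)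
  then show ?thesis
    by (simp add: sum.delta' in_keys_iff)
qed

lemmas linearity_simps = qstar_add_left qstar_add_right qstar_sc_left qstar_sc_right
  lderiv_add lderiv_sc qweight_add qweight_sc qvec.scale_right_distrib

lemma lderiv_qstar:
  "lderiv a (qstar q P Q) = qstar q (lderiv a P) Q + qstar q (qweight q a P) (lderiv a Q)"
proof (rule bilinear_eq_on_words[where F = "\<lambda>P Q. lderiv a (qstar q P Q)"])
  fix u v :: word
  show "lderiv a (qstar q (wd u) (wd v)) =
      qstar q (lderiv a (wd u)) (wd v) + qstar q (qweight q a (wd u)) (lderiv a (wd v))"
    by (cases u; cases v)
       (auto simp: qstar_wd qsh_Cons_Cons qweight_wd lderiv_add lderiv_sc lderiv_prep qstar_sc_left)
qed (rule linear_qvecI; simp add: linearity_simps)+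

lemma qweight_qstar:
  assumes "q \<noteq> 0"
  shows "qweight q a (qstar q P Q) = qstar q (qweight q a P) (qweight q a Q)"
proof (rule bilinear_eq_on_words[where F = "\<lambda>P Q. qweight q a (qstar q P Q)"])
  fix u v :: word
  show "qweight q a (qstar q (wd u) (wd v)) = qstar q (qweight q a (wd u)) (qweight q a (wd v))"
    by (simp add: qstar_wd qweight_qsh assms qweight_wd qstar_sc_left qstar_sc_right
        power_int_add mult.commute)
qed (rule linear_qvecI; simp add: linearity_simps)+

definition qassoc :: "'a::field \<Rightarrow> 'a qvec \<Rightarrow> 'a qvec \<Rightarrow> 'a qvec \<Rightarrow> 'a qvec" where
  "qassoc q P Q R = qstar q (qstar q P Q) R - qstar q P (qstar q Q R)"

lemma qassoc_sc_left: "qassoc q (sc c P) Q R = sc c (qassoc q P Q R)"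
  and qassoc_sc_middle: "qassoc q P (sc c Q) R = sc c (qassoc q P Q R)"
  and qassoc_sc_right: "qassoc q P Q (sc c R) = sc c (qassoc q P Q R)"
  by (simp_all add: qassoc_def qstar_sc_left qstar_sc_right qvec.scale_right_diff_distrib)

lemma coeff_qassoc_Nil: "coeff (qassoc q P Q R) [] = 0"
  by (simp add: qassoc_def lookup_minus coeff_qstar_Nil)

lemma lderiv_qassoc:
  assumes "q \<noteq> 0"
  shows "lderiv a (qassoc q P Q R) = qassoc q (lderiv a P) Q R
    + qassoc q (qweight q a P) (lderiv a Q) R + qassoc q (qweight q a P) (qweight q a Q) (lderiv a R)"
  by (simp add: qassoc_def lderiv_diff lderiv_qstar qweight_qstar assms
      qstar_add_left qstar_add_right)

lemma qassoc_words:
  assumes "q \<noteq> 0"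
  shows "qassoc q (wd u) (wd v) (wd w) = 0"
proof (induction "length u + length v + length w" arbitrary: u v w rule: less_induct)
  case less
  show ?case
  proof (cases "u = [] \<or> v = [] \<or> w = []")
    case True
    then show ?thesis
      by (auto simp: qassoc_def one_V_def[symmetric])
  next
    case False
    then obtain b u' c v' d w' where uvw: "u = b # u'" "v = c # v'" "w = d # w'"
      by (meson neq_Nil_conv)
    have IH: "qassoc q (wd x) (wd y) (wd z) = 0"
      if "length x + length y + length z < length u + length v + length w" for x y z
      using less that by blast
    show ?thesis
    proof (rule qvec_eqI)
      fix a
      show "lderiv a (qassoc q (wd u) (wd v) (wd w)) = lderiv a 0"
        unfolding lderiv_qassoc[OF assms] uvw
        by (simp add: qweight_wd qassoc_sc_left qassoc_sc_middle qassoc_sc_right IH uvw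
            del: weight_Cons)
    qed (simp add: coeff_qassoc_Nil)
  qed
qed

lemma qstar_assoc:
  assumes "q \<noteq> 0"
  shows "qstar q (qstar q P Q) R = qstar q P (qstar q Q R)"
proof -
  have words: "qassoc q (wd u) (wd v) R = 0" for u v
  proof (rule linear_eq_on_words[where F = "qassoc q (wd u) (wd v)" and G = "\<lambda>_. 0"])
    show "qlinear (qassoc q (wd u) (wd v))"
      by (rule linear_qvecI) (simp_all add: qassoc_def linearity_simps qvec.scale_right_diff_distrib)
  qed (simp_all add: linear_qvecI qassoc_words assms)
  have "qassoc q P Q R = 0"
  proof (rule bilinear_eq_on_words[where F = "\<lambda>P Q. qassoc q P Q R" and G = "\<lambda>_ _. 0"])
    show "qlinear (\<lambda>P. qassoc q P Q R)" "qlinear (\<lambda>Q. qassoc q P Q R)" for P Q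
      by (rule linear_qvecI; simp add: qassoc_def linearity_simps qvec.scale_right_diff_distrib)+
  qed (simp_all add: linear_qvecI words)
  then show ?thesis
    by (simp add: qassoc_def)
qed

section \<open>Generating functions\<close>

text \<open>A sequence f stands for the generating function \<open>\<Sum>n. f n t\<^sup>n\<close> with coefficients
  in V: qconv is the product of generating functions, shift_seq the multiplication by t and
  dilate c the substitution \<open>t \<mapsto> c t\<close>.\<close>

definition qconv :: "'a::field \<Rightarrow> (nat \<Rightarrow> 'a qvec) \<Rightarrow> (nat \<Rightarrow> 'a qvec) \<Rightarrow> nat \<Rightarrow> 'a qvec" where
  "qconv q f g n = (\<Sum>i\<in>{0..n}. qstar q (f i) (g (n - i)))"

definition delta :: "nat \<Rightarrow> 'a::field qvec" where
  "delta n = (if n = 0 then one_V else 0)"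

definition shift_seq :: "(nat \<Rightarrow> 'a::field qvec) \<Rightarrow> nat \<Rightarrow> 'a qvec" where
  "shift_seq f n = (case n of 0 \<Rightarrow> 0 | Suc m \<Rightarrow> f m)"

definition dilate :: "'a::field \<Rightarrow> (nat \<Rightarrow> 'a qvec) \<Rightarrow> nat \<Rightarrow> 'a qvec" where
  "dilate c f n = sc (c ^ n) (f n)"

lemma shift_seq_0 [simp]: "shift_seq f 0 = 0"
  and shift_seq_Suc [simp]: "shift_seq f (Suc n) = f n"
  by (simp_all add: shift_seq_def)

lemma sum_triples_split_left:
  fixes F :: "nat \<Rightarrow> nat \<Rightarrow> nat \<Rightarrow> 'b::comm_monoid_add"
  shows "(\<Sum>(i, j, k)\<in>{(i, j, k). i + j + k = n}. F i j k) =
    (\<Sum>l\<in>{0..n}. \<Sum>i\<in>{0..l}. F i (l - i) (n - l))"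
proof -
  have "(\<Sum>l\<in>{0..n}. \<Sum>i\<in>{0..l}. F i (l - i) (n - l)) =
      (\<Sum>(l, i)\<in>Sigma {0..n} (\<lambda>l. {0..l}). F i (l - i) (n - l))"
    by (rule sum.Sigma) auto
  also have "\<dots> = (\<Sum>(i, j, k)\<in>{(i, j, k). i + j + k = n}. F i j k)"
    by (rule sum.reindex_bij_witness[where i = "\<lambda>(i, j, k). (i + j, i)" and j = "\<lambda>(l, i). (i, l - i, n - l)"])
       auto
  finally show ?thesis ..
qed

lemma sum_triples_split_right:
  fixes F :: "nat \<Rightarrow> nat \<Rightarrow> nat \<Rightarrow> 'b::comm_monoid_add"
  shows "(\<Sum>(i, j, k)\<in>{(i, j, k). i + j + k = n}. F i j k) =
    (\<Sum>i\<in>{0..n}. \<Sum>j\<in>{0..n - i}. F i j (n - i - j))"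
proof -
  have "(\<Sum>i\<in>{0..n}. \<Sum>j\<in>{0..n - i}. F i j (n - i - j)) =
      (\<Sum>(i, j)\<in>Sigma {0..n} (\<lambda>i. {0..n - i}). F i j (n - i - j))"
    by (rule sum.Sigma) auto
  also have "\<dots> = (\<Sum>(i, j, k)\<in>{(i, j, k). i + j + k = n}. F i j k)"
    by (rule sum.reindex_bij_witness[where i = "\<lambda>(i, j, k). (i, j)" and j = "\<lambda>(i, j). (i, j, n - i - j)"])
       auto
  finally show ?thesis ..
qed

lemma sum_triples_reverse:
  fixes F :: "nat \<Rightarrow> nat \<Rightarrow> nat \<Rightarrow> 'b::comm_monoid_add"
  shows "(\<Sum>(i, j, k)\<in>{(i, j, k). i + j + k + 1 = n}. F k j i) =
    (\<Sum>(i, j, k)\<in>{(i, j, k). i + j + k + 1 = n}. F i j k)"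
  by (rule sum.reindex_bij_witness[where i = "\<lambda>(i, j, k). (k, j, i)" and j = "\<lambda>(i, j, k). (k, j, i)"])
     auto

lemma qconv_qconv_left:
  "qconv q (qconv q f g) h n = (\<Sum>(i, j, k)\<in>{(i, j, k). i + j + k = n}. qstar q (qstar q (f i) (g j)) (h k))"
  by (simp add: sum_triples_split_left qconv_def qstar_sum_left)

lemma qconv_qconv_right:
  "qconv q f (qconv q g h) n = (\<Sum>(i, j, k)\<in>{(i, j, k). i + j + k = n}. qstar q (f i) (qstar q (g j) (h k)))"
  by (simp add: sum_triples_split_right qconv_def qstar_sum_right diff_diff_add)

lemma shift_seq_qconv_qconv:
  "shift_seq (qconv q (qconv q f g) h) n =
    (\<Sum>(i, j, k)\<in>{(i, j, k). i + j + k + 1 = n}. qstar q (qstar q (f i) (g j)) (h k))"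
proof (cases n)
  case 0
  have "{(i, j, k). i + j + k + 1 = (0::nat)} = {}"
    by auto
  then show ?thesis
    unfolding 0 by (simp only: sum.empty shift_seq_0)
qed (simp add: qconv_qconv_left)

lemma qconv_assoc:
  assumes "q \<noteq> 0"
  shows "qconv q (qconv q f g) h = qconv q f (qconv q g h)"
  by (rule ext) (simp add: qconv_qconv_left qconv_qconv_right qstar_assoc assms)

lemma qconv_cong:
  assumes "\<And>i. i \<le> n \<Longrightarrow> f i = f' i" and "\<And>i. i \<le> n \<Longrightarrow> g i = g' i"
  shows "qconv q f g n = qconv q f' g' n"
  unfolding qconv_def using assms by (intro sum.cong) auto

lemma qconv_add_left: "qconv q (\<lambda>i. f i + g i) h = (\<lambda>n. qconv q f h n + qconv q g h n)"
  and qconv_add_right: "qconv q h (\<lambda>i. f i + g i) = (\<lambda>n. qconv q h f n + qconv q h g n)"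
  and qconv_diff_left: "qconv q (\<lambda>i. f i - g i) h = (\<lambda>n. qconv q f h n - qconv q g h n)"
  and qconv_diff_right: "qconv q h (\<lambda>i. f i - g i) = (\<lambda>n. qconv q h f n - qconv q h g n)"
  and qconv_sc_left: "qconv q (\<lambda>i. sc c (f i)) h = (\<lambda>n. sc c (qconv q f h n))"
  and qconv_sc_right: "qconv q h (\<lambda>i. sc c (f i)) = (\<lambda>n. sc c (qconv q h f n))"
  and qconv_uminus_left: "qconv q (\<lambda>i. - f i) h = (\<lambda>n. - qconv q f h n)"
  and qconv_uminus_right: "qconv q h (\<lambda>i. - f i) = (\<lambda>n. - qconv q h f n)"
  by (simp_all add: fun_eq_iff qconv_def qstar_add_left qstar_add_right qstar_sc_left
      qstar_sc_right qstar_diff_left qstar_diff_right qstar_uminus_left qstar_uminus_right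
      qvec.scale_sum_right sum.distrib sum_subtractf sum_negf)

lemma qconv_zero_left [simp]: "qconv q (\<lambda>i. 0) h = (\<lambda>i. 0)"
  and qconv_zero_right [simp]: "qconv q h (\<lambda>i. 0) = (\<lambda>i. 0)"
  by (simp_all add: qconv_def fun_eq_iff)

lemma qconv_delta_left [simp]: "qconv q delta f = f"
proof
  fix n
  have "qconv q delta f n = (\<Sum>i\<in>{0..n}. if i = 0 then f n else 0)"
    unfolding qconv_def by (intro sum.cong) (auto simp: delta_def)
  then show "qconv q delta f n = f n"
    by simp
qed

lemma qconv_delta_right [simp]: "qconv q f delta = f"
proof
  fix n
  have "qconv q f delta n = (\<Sum>i\<in>{0..n}. if i = n then f n else 0)"
    unfolding qconv_def by (intro sum.cong) (auto simp: delta_def)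
  then show "qconv q f delta n = f n"
    by simp
qed

lemma qconv_shift_left: "qconv q (shift_seq f) g = shift_seq (qconv q f g)"
proof
  fix n
  show "qconv q (shift_seq f) g n = shift_seq (qconv q f g) n"
  proof (cases n)
    case (Suc m)
    show ?thesis
      unfolding qconv_def Suc by (subst sum.atLeast0_atMost_Suc_shift) simp
  qed (simp add: qconv_def)
qed

lemma qconv_shift_right: "qconv q f (shift_seq g) = shift_seq (qconv q f g)"
proof
  fix n
  show "qconv q f (shift_seq g) n = shift_seq (qconv q f g) n"
  proof (cases n)
    case (Suc m)
    have "qconv q f (shift_seq g) n = (\<Sum>i\<in>{0..m}. qstar q (f i) (shift_seq g (Suc m - i)))"
      by (simp add: qconv_def Suc)
    also have "\<dots> = qconv q f g m"
      unfolding qconv_def by (intro sum.cong) (auto simp: Suc_diff_le)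
    finally show ?thesis
      by (simp add: Suc)
  qed (simp add: qconv_def)
qed

lemma qconv_dilate: "qconv q (dilate c f) (dilate c g) = dilate c (qconv q f g)"
proof
  fix n
  have "qconv q (dilate c f) (dilate c g) n = (\<Sum>i\<in>{0..n}. sc (c ^ n) (qstar q (f i) (g (n - i))))"
    unfolding qconv_def dilate_def
    by (intro sum.cong) (auto simp: qstar_sc_left qstar_sc_right mult.commute simp flip: power_add)
  then show "qconv q (dilate c f) (dilate c g) n = dilate c (qconv q f g) n"
    by (simp add: dilate_def qconv_def qvec.scale_sum_right)
qed

lemma dilate_delta [simp]: "dilate c delta = delta"
  by (rule ext) (simp add: dilate_def delta_def)

lemma dilate_dilate [simp]: "dilate c (dilate d f) = dilate (c * d) f"
  by (rule ext) (simp add: dilate_def power_mult_distrib mult.commute)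

lemma dilate_1 [simp]: "dilate 1 f = f"
  by (rule ext) (simp add: dilate_def)

lemma dilate_zero [simp]: "dilate c (\<lambda>i. 0) = (\<lambda>i. 0)"
  by (rule ext) (simp add: dilate_def)

lemma dilate_shift_seq: "dilate c (shift_seq f) = (\<lambda>n. sc c (shift_seq (dilate c f) n))"
  by (rule ext) (simp add: dilate_def shift_seq_def split: nat.split)

lemma coeff_qconv_Nil: "coeff (qconv q f g n) [] = (\<Sum>i\<in>{0..n}. coeff (f i) [] * coeff (g (n - i)) [])"
  by (simp add: qconv_def lookup_sum coeff_qstar_Nil)

lemma lderiv_qconv: "lderiv a (qconv q f g n) =
    qconv q (\<lambda>i. lderiv a (f i)) g n + qconv q (\<lambda>i. qweight q a (f i)) (\<lambda>i. lderiv a (g i)) n"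
  by (simp add: qconv_def lderiv_sum lderiv_qstar sum.distrib)

lemma lderiv_dilate: "lderiv a (dilate c f n) = dilate c (\<lambda>i. lderiv a (f i)) n"
  by (simp add: dilate_def lderiv_sc)

lemma qweight_qconv:
  assumes "q \<noteq> 0"
  shows "qweight q a (qconv q f g n) = qconv q (\<lambda>i. qweight q a (f i)) (\<lambda>i. qweight q a (g i)) n"
  by (simp add: qconv_def qweight_sum qweight_qstar assms)

lemma qweight_delta [simp]: "qweight q a (delta n) = delta n"
  by (simp add: delta_def one_V_def qweight_wd)

lemma lderiv_delta [simp]: "lderiv a (delta n) = 0"
  by (simp add: delta_def one_V_def)

lemma qconv_eq_zero_cancel:
  assumes "f 0 = one_V" and "\<And>n. qconv q f g n = 0"
  shows "g n = 0"
proof (induction n rule: less_induct)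
  case (less n)
  have "qconv q f g n = g n + (\<Sum>i\<in>{1..n}. qstar q (f i) (g (n - i)))"
    by (simp add: qconv_def assms(1) sum.atLeast_Suc_atMost)
  also have "(\<Sum>i\<in>{1..n}. qstar q (f i) (g (n - i))) = 0"
    using less by (intro sum.neutral) auto
  finally show ?case
    using assms(2) by simp
qed

lemma qconv_inverse_commute:
  assumes "q \<noteq> 0" and "f 0 = one_V" and "qconv q f g = delta"
  shows "qconv q g f = delta"
proof -
  let ?d = "\<lambda>n. qconv q g f n - delta n"
  have "qconv q f ?d n = 0" for n
    by (simp add: qconv_diff_right flip: qconv_assoc[OF assms(1)]) (simp add: assms(3))
  then have "?d n = 0" for n
    by (rule qconv_eq_zero_cancel[where f = f and g = ?d, OF assms(2)])
  then show ?thesis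
    by auto
qed

lemma qconv_inverse_unique:
  assumes "q \<noteq> 0" and "qconv q h f = delta" and "qconv q f g = delta"
  shows "h = g"
  by (metis assms qconv_assoc qconv_delta_left qconv_delta_right)

lemma seq_eqI_lderiv:
  fixes S T :: "nat \<Rightarrow> 'a::field qvec"
  assumes "S 0 = T 0"
    and "\<And>m. coeff (S (Suc m)) [] = coeff (T (Suc m)) []"
    and "\<And>a m. (\<And>i. i \<le> m \<Longrightarrow> S i = T i) \<Longrightarrow> lderiv a (S (Suc m)) = lderiv a (T (Suc m))"
  shows "S = T"
proof
  fix n
  show "S n = T n"
  proof (induction n rule: less_induct)
    case (less n)
    show ?case
    proof (cases n)
      case (Suc m)
      have "lderiv a (S (Suc m)) = lderiv a (T (Suc m))" for a
        by (rule assms(3)) (simp add: less Suc)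
      then show ?thesis
        unfolding Suc by (rule qvec_eqI[OF assms(2)])
    qed (use assms(1) in simp)
  qed
qed

section \<open>The alternating words\<close>

lemma Wneg_eq: "Wneg k = X # Gw k"
  and Wpos_eq: "Wpos k = Y # Gtw k"
  and Gw_Suc: "Gw (Suc k) = Y # Wneg k"
  and Gtw_Suc: "Gtw (Suc k) = X # Wpos k"
  by (simp_all add: Wneg_def Wpos_def Gw_def Gtw_def upt_conv_Cons map_Suc_upt[symmetric] del: upt_Suc)

lemma Gw_0 [simp]: "Gw 0 = []"
  and Gtw_0 [simp]: "Gtw 0 = []"
  by (simp_all add: Gw_def Gtw_def)

lemma weight_Gw [simp]: "weight (Gw k) a = 0"
  by (cases a; induction k) (auto simp: Gw_Suc Wneg_eq bil_def)

lemma weight_Gtw [simp]: "weight (Gtw k) a = 0"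
  by (cases a; induction k) (auto simp: Gtw_Suc Wpos_eq bil_def)

definition Gseq :: "nat \<Rightarrow> 'a::field qvec" where
  "Gseq k = wd (Gw k)"

definition Gtseq :: "nat \<Rightarrow> 'a::field qvec" where
  "Gtseq k = wd (Gtw k)"

definition Wnegseq :: "nat \<Rightarrow> 'a::field qvec" where
  "Wnegseq k = wd (Wneg k)"

definition Wposseq :: "nat \<Rightarrow> 'a::field qvec" where
  "Wposseq k = wd (Wpos k)"

lemma Gseq_0 [simp]: "Gseq 0 = one_V"
  and Gtseq_0 [simp]: "Gtseq 0 = one_V"
  by (simp_all add: Gseq_def Gtseq_def one_V_def)

lemma coeff_Gseq_Suc [simp]: "coeff (Gseq (Suc k)) [] = 0"
  and coeff_Gtseq_Suc [simp]: "coeff (Gtseq (Suc k)) [] = 0"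
  and coeff_Wnegseq [simp]: "coeff (Wnegseq k) [] = 0"
  and coeff_Wposseq [simp]: "coeff (Wposseq k) [] = 0"
  by (simp_all add: Gseq_def Gtseq_def Wnegseq_def Wposseq_def Gw_Suc Gtw_Suc Wneg_eq Wpos_eq coeff_wd)

lemma lderiv_Gseq [simp]: "lderiv a (Gseq k) = (if a = Y then shift_seq Wnegseq k else 0)"
  and lderiv_Gtseq [simp]: "lderiv a (Gtseq k) = (if a = X then shift_seq Wposseq k else 0)"
  by (cases k; simp add: Gseq_def Gtseq_def Wnegseq_def Wposseq_def Gw_Suc Gtw_Suc)+

lemma lderiv_Wnegseq [simp]: "lderiv a (Wnegseq k) = (if a = X then Gseq k else 0)"
  and lderiv_Wposseq [simp]: "lderiv a (Wposseq k) = (if a = Y then Gtseq k else 0)"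
  by (simp_all add: Gseq_def Gtseq_def Wnegseq_def Wposseq_def Wneg_eq Wpos_eq)

lemma qweight_Gseq [simp]: "qweight q a (Gseq k) = Gseq k"
  and qweight_Gtseq [simp]: "qweight q a (Gtseq k) = Gtseq k"
  by (simp_all add: Gseq_def Gtseq_def qweight_wd)

lemma qweight_Wnegseq [simp]:
  "qweight q a (Wnegseq k) = sc (if a = X then q ^ 2 else inverse (q ^ 2)) (Wnegseq k)"
  by (cases a) (simp_all add: Wnegseq_def qweight_wd Wneg_eq bil_def power_int_minus)

lemma qweight_Wposseq [simp]:
  "qweight q a (Wposseq k) = sc (if a = Y then q ^ 2 else inverse (q ^ 2)) (Wposseq k)"
  by (cases a) (simp_all add: Wposseq_def qweight_wd Wpos_eq bil_def power_int_minus)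

lemma Gtseq_Wposseq_commute:
  assumes "q \<noteq> 0"
  shows "qconv q Gtseq (dilate (q^2) Wposseq) = qconv q Wposseq (dilate (q^2) Gtseq)"
proof (rule ext, rule qvec_eqI)
  fix n a
  show "lderiv a (qconv q Gtseq (dilate (q^2) Wposseq) n) = lderiv a (qconv q Wposseq (dilate (q^2) Gtseq) n)"
  proof (cases a)
    case X
    then show ?thesis
      by (simp add: lderiv_qconv lderiv_dilate dilate_shift_seq qconv_sc_left qconv_sc_right
          qconv_shift_left qconv_shift_right assms)
  qed (simp add: lderiv_qconv lderiv_dilate)
qed (simp add: coeff_qconv_Nil dilate_def)

section \<open>The inverse of the generating function of G-tilde\<close>

lemma qconv_Gtseq_eq_delta:
  assumes "D 0 = one_V"
    and "\<forall>m::nat. m \<ge> 1 \<longrightarrow> (\<Sum>i\<in>{0..m}. qstar q (D i) (wd (Gtw (m - i)))) = 0"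
  shows "qconv q D Gtseq = delta"
proof
  fix m
  show "qconv q D Gtseq m = delta m"
  proof (cases m)
    case (Suc k)
    have "qconv q D Gtseq m = (\<Sum>i\<in>{0..m}. qstar q (D i) (wd (Gtw (m - i))))"
      by (simp add: qconv_def Gtseq_def)
    also have "\<dots> = 0"
      using assms(2) Suc by (simp only: One_nat_def Suc_le_mono le0 simp_thms)
    finally show ?thesis
      using Suc by (simp add: delta_def)
  qed (simp add: qconv_def delta_def assms(1))
qed

locale Gt_inverse =
  fixes q :: "'a::field" and D :: "nat \<Rightarrow> 'a qvec"
  assumes q_nonzero: "q \<noteq> 0"
    and D_qconv_Gtseq: "qconv q D Gtseq = delta"
begin

lemma D_0: "D 0 = one_V"
  using fun_cong[OF D_qconv_Gtseq, of 0] by (simp add: qconv_def delta_def)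

lemma Gtseq_qconv_D: "qconv q Gtseq D = delta"
  by (rule qconv_inverse_commute[OF q_nonzero D_0 D_qconv_Gtseq])

lemma qweight_D [simp]: "qweight q a (D n) = D n"
proof -
  have "qconv q (\<lambda>i. qweight q a (D i)) Gtseq n = delta n" for n
    using qweight_qconv[OF q_nonzero, of a D Gtseq n] by (simp add: D_qconv_Gtseq)
  then have "(\<lambda>i. qweight q a (D i)) = D"
    by (intro qconv_inverse_unique[OF q_nonzero _ Gtseq_qconv_D] ext)
  then show ?thesis
    by (rule fun_cong)
qed

lemma coeff_D_Suc [simp]: "coeff (D (Suc m)) [] = 0"
proof -
  have "0 = coeff (qconv q D Gtseq (Suc m)) []"
    by (simp add: D_qconv_Gtseq delta_def)
  also have "\<dots> = coeff (D (Suc m)) []"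
    by (simp add: coeff_qconv_Nil Suc_diff_le coeff_one_V)
  finally show ?thesis ..
qed

lemma lderiv_D: "lderiv a (D n) = - qconv q (qconv q D (\<lambda>i. lderiv a (Gtseq i))) D n"
proof -
  let ?dGt = "\<lambda>i. lderiv a (Gtseq i)"
  have "qconv q (\<lambda>i. lderiv a (D i)) Gtseq n = - qconv q D ?dGt n" for n
  proof -
    have "0 = lderiv a (qconv q D Gtseq n)"
      by (simp add: D_qconv_Gtseq)
    also have "\<dots> = qconv q (\<lambda>i. lderiv a (D i)) Gtseq n + qconv q D ?dGt n"
      by (simp add: lderiv_qconv)
    finally show ?thesis
      by (simp add: eq_neg_iff_add_eq_0)
  qed
  then have "qconv q (\<lambda>i. lderiv a (D i)) Gtseq = (\<lambda>n. - qconv q D ?dGt n)" ..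
  then have "(\<lambda>i. lderiv a (D i)) = qconv q (\<lambda>n. - qconv q D ?dGt n) D"
    by (metis qconv_assoc[OF q_nonzero] Gtseq_qconv_D qconv_delta_right)
  then show ?thesis
    by (simp add: qconv_uminus_left fun_eq_iff)
qed

lemma lderiv_Y_D [simp]: "lderiv Y (D n) = 0"
  by (simp add: lderiv_D)

lemma lderiv_X_D: "lderiv X (D n) = - shift_seq (qconv q (qconv q D Wposseq) D) n"
  by (simp add: lderiv_D qconv_shift_left qconv_shift_right)

lemma D_qconv_Wposseq: "qconv q D Wposseq = dilate (q^2) (qconv q Wposseq D)"
proof -
  let ?c = "q^2"
  have "qconv q D Wposseq = qconv q (qconv q D Wposseq) (dilate ?c (qconv q Gtseq D))"
    by (simp add: Gtseq_qconv_D)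
  also have "\<dots> = qconv q (qconv q D (qconv q Wposseq (dilate ?c Gtseq))) (dilate ?c D)"
    by (simp add: qconv_assoc q_nonzero flip: qconv_dilate)
  also have "\<dots> = qconv q (qconv q D (qconv q Gtseq (dilate ?c Wposseq))) (dilate ?c D)"
    by (simp add: Gtseq_Wposseq_commute q_nonzero)
  also have "\<dots> = dilate ?c (qconv q Wposseq D)"
    by (simp add: qconv_dilate D_qconv_Gtseq flip: qconv_assoc[OF q_nonzero])
  finally show ?thesis .
qed

lemma Wposseq_qconv_D: "qconv q Wposseq D = dilate (inverse (q^2)) (qconv q D Wposseq)"
  by (simp add: D_qconv_Wposseq q_nonzero)

definition G_via_Wneg_D_Wpos :: "nat \<Rightarrow> 'a qvec" where
  "G_via_Wneg_D_Wpos n = dilate (q^2) D n + sc (q^2) (shift_seq (qconv q (qconv q Wnegseq D) Wposseq) n)"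

text \<open>The difference \<open>Gseq - G_via_Wneg_D_Wpos\<close> is kept in the statement: in the
  induction below it vanishes in all degrees that matter.\<close>

lemma lderiv_X_Wneg_D_Wpos:
  "lderiv X (qconv q (qconv q Wnegseq D) Wposseq m) =
     qconv q (qconv q (\<lambda>i. Gseq i - G_via_Wneg_D_Wpos i) D) Wposseq m
     + sc (q^(2*m)) (qconv q (qconv q D Wposseq) D m)"
proof -
  let ?T = "qconv q (qconv q Wnegseq D) Wposseq" and ?R = G_via_Wneg_D_Wpos
    and ?P = "qconv q (qconv q D Wposseq) D"
  let ?S = "sc (q^2) (shift_seq (qconv q ?T (qconv q D Wposseq)) m)"
  have lderiv_Wneg_D: "(\<lambda>i. lderiv X (qconv q Wnegseq D i)) =
      (\<lambda>i. qconv q Gseq D i - sc (q^2) (shift_seq (qconv q Wnegseq ?P) i))"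
    by (simp add: fun_eq_iff lderiv_qconv lderiv_X_D qconv_uminus_right qconv_sc_left qconv_shift_right)
  have "lderiv X (?T m) = qconv q (qconv q Gseq D) Wposseq m - ?S"
    by (subst lderiv_qconv)
       (simp add: lderiv_Wneg_D qconv_diff_left qconv_sc_left qconv_shift_left qconv_assoc q_nonzero)
  also have "qconv q (qconv q Gseq D) Wposseq m =
      qconv q (qconv q (\<lambda>i. Gseq i - ?R i) D) Wposseq m + qconv q (qconv q ?R D) Wposseq m"
    by (simp add: qconv_diff_left)
  also have "qconv q (qconv q ?R D) Wposseq m = sc (q^(2*m)) (?P m) + ?S"
  proof -
    have "qconv q (qconv q (dilate (q^2) D) D) Wposseq = dilate (q^2) (qconv q D (qconv q Wposseq D))"
      by (simp add: qconv_assoc q_nonzero D_qconv_Wposseq qconv_dilate)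
    then have "qconv q (qconv q ?R D) Wposseq m = dilate (q^2) (qconv q D (qconv q Wposseq D)) m + ?S"
      by (simp add: G_via_Wneg_D_Wpos_def[abs_def] qconv_add_left qconv_sc_left qconv_shift_left
          qconv_assoc q_nonzero)
    then show ?thesis
      by (simp add: dilate_def power_mult qconv_assoc q_nonzero)
  qed
  finally show ?thesis
    by (simp add: algebra_simps)
qed

lemma lderiv_Y_G_via_Wneg_D_Wpos: "lderiv Y (G_via_Wneg_D_Wpos (Suc m)) = Wnegseq m"
  by (simp add: G_via_Wneg_D_Wpos_def lderiv_add lderiv_sc lderiv_dilate lderiv_qconv
      qweight_qconv q_nonzero qconv_sc_left qconv_assoc D_qconv_Gtseq)

lemma lderiv_X_G_via_Wneg_D_Wpos: "lderiv X (G_via_Wneg_D_Wpos (Suc m)) =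
    sc (q^2) (qconv q (qconv q (\<lambda>i. Gseq i - G_via_Wneg_D_Wpos i) D) Wposseq m)"
  by (simp add: G_via_Wneg_D_Wpos_def lderiv_add lderiv_sc lderiv_dilate dilate_def lderiv_X_D
      lderiv_X_Wneg_D_Wpos qvec.scale_right_distrib power_mult)

lemma Gseq_eq_G_via_Wneg_D_Wpos: "Gseq = G_via_Wneg_D_Wpos"
proof (rule seq_eqI_lderiv)
  fix a m
  assume IH: "\<And>i. i \<le> m \<Longrightarrow> Gseq i = G_via_Wneg_D_Wpos i"
  show "lderiv a (Gseq (Suc m)) = lderiv a (G_via_Wneg_D_Wpos (Suc m))"
  proof (cases a)
    case X
    have "qconv q (qconv q (\<lambda>i. Gseq i - G_via_Wneg_D_Wpos i) D) Wposseq m =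
        qconv q (qconv q (\<lambda>i. 0) D) Wposseq m"
      using IH by (intro qconv_cong refl) simp
    then show ?thesis
      by (simp add: X lderiv_X_G_via_Wneg_D_Wpos)
  qed (simp add: lderiv_Y_G_via_Wneg_D_Wpos)
qed (simp_all add: G_via_Wneg_D_Wpos_def dilate_def D_0 lookup_add coeff_qconv_Nil)

definition G_via_Wpos_D_Wneg :: "nat \<Rightarrow> 'a qvec" where
  "G_via_Wpos_D_Wneg n = dilate (inverse (q^2)) D n + shift_seq (qconv q (qconv q Wposseq D) Wnegseq) n"

lemma lderiv_X_Wpos_D_Wneg:
  "lderiv X (qconv q (qconv q Wposseq D) Wnegseq m) =
     sc (inverse (q^2)) (qconv q (qconv q Wposseq D) (\<lambda>i. Gseq i - G_via_Wpos_D_Wneg i) m)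
     + sc (inverse (q^2) ^ Suc m) (qconv q (qconv q D Wposseq) D m)"
proof -
  let ?c = "inverse (q^2)" and ?T = "qconv q (qconv q Wposseq D) Wnegseq"
    and ?R = G_via_Wpos_D_Wneg and ?P = "qconv q (qconv q D Wposseq) D"
  let ?S = "shift_seq (qconv q (qconv q Wposseq D) ?T) m"
  have lderiv_Wpos_D: "(\<lambda>i. lderiv X (qconv q Wposseq D i)) =
      (\<lambda>i. - sc ?c (shift_seq (qconv q Wposseq ?P) i))"
    by (simp add: fun_eq_iff lderiv_qconv lderiv_X_D qconv_uminus_right qconv_sc_left qconv_shift_right)
  have qweight_Wpos_D: "(\<lambda>i. qweight q X (qconv q Wposseq D i)) = (\<lambda>i. sc ?c (qconv q Wposseq D i))"
    by (simp add: fun_eq_iff qweight_qconv q_nonzero qconv_sc_left)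
  have "lderiv X (?T m) = sc ?c (qconv q (qconv q Wposseq D) Gseq m) - sc ?c ?S"
    by (subst lderiv_qconv)
       (simp add: lderiv_Wpos_D qweight_Wpos_D qconv_uminus_left qconv_sc_left qconv_shift_left
         qconv_assoc q_nonzero)
  also have "qconv q (qconv q Wposseq D) Gseq m =
      qconv q (qconv q Wposseq D) (\<lambda>i. Gseq i - ?R i) m + qconv q (qconv q Wposseq D) ?R m"
    by (simp add: qconv_diff_right)
  also have "qconv q (qconv q Wposseq D) ?R m = sc (?c ^ m) (?P m) + ?S"
  proof -
    have "qconv q (qconv q Wposseq D) (dilate ?c D) = dilate ?c ?P"
      by (simp add: Wposseq_qconv_D qconv_dilate)
    then have "qconv q (qconv q Wposseq D) ?R m = dilate ?c ?P m + ?S"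
      by (simp add: G_via_Wpos_D_Wneg_def[abs_def] qconv_add_right qconv_shift_right)
    then show ?thesis
      by (simp add: dilate_def)
  qed
  finally show ?thesis
    by (simp add: qvec.scale_right_distrib qvec.scale_right_diff_distrib mult.commute)
qed

lemma lderiv_Y_G_via_Wpos_D_Wneg: "lderiv Y (G_via_Wpos_D_Wneg (Suc m)) = Wnegseq m"
  by (simp add: G_via_Wpos_D_Wneg_def lderiv_add lderiv_dilate lderiv_qconv Gtseq_qconv_D)

lemma lderiv_X_G_via_Wpos_D_Wneg: "lderiv X (G_via_Wpos_D_Wneg (Suc m)) =
    sc (inverse (q^2)) (qconv q (qconv q Wposseq D) (\<lambda>i. Gseq i - G_via_Wpos_D_Wneg i) m)"
  by (simp add: G_via_Wpos_D_Wneg_def lderiv_add lderiv_sc lderiv_dilate dilate_def lderiv_X_D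
      lderiv_X_Wpos_D_Wneg)

lemma Gseq_eq_G_via_Wpos_D_Wneg: "Gseq = G_via_Wpos_D_Wneg"
proof (rule seq_eqI_lderiv)
  fix a m
  assume IH: "\<And>i. i \<le> m \<Longrightarrow> Gseq i = G_via_Wpos_D_Wneg i"
  show "lderiv a (Gseq (Suc m)) = lderiv a (G_via_Wpos_D_Wneg (Suc m))"
  proof (cases a)
    case X
    have "qconv q (qconv q Wposseq D) (\<lambda>i. Gseq i - G_via_Wpos_D_Wneg i) m =
        qconv q (qconv q Wposseq D) (\<lambda>i. 0) m"
      using IH by (intro qconv_cong refl) simp
    then show ?thesis
      by (simp add: X lderiv_X_G_via_Wpos_D_Wneg)
  qed (simp add: lderiv_Y_G_via_Wpos_D_Wneg)
qed (simp_all add: G_via_Wpos_D_Wneg_def dilate_def D_0 lookup_add coeff_qconv_Nil)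

end

theorem theorem9p15:
  fixes q :: "'a::field" and D :: "nat \<Rightarrow> 'a qvec" and n :: nat
  assumes q_nz: "q \<noteq> 0"
    and q_nroot: "\<forall>m::nat. m > 0 \<longrightarrow> q ^ m \<noteq> 1"
    and D0: "D 0 = one_V"
    and Drec: "\<forall>m::nat. m \<ge> 1 \<longrightarrow> (\<Sum>i\<in>{0..m}. qstar q (D i) (wd (Gtw (m - i)))) = 0"
  shows "(wd (Gw n) = sc (q ^ (2 * n)) (D n)
           + sc (q ^ 2) (\<Sum>(i, j, k)\<in>{(i, j, k). i + j + k + 1 = n}.
                            qstar q (qstar q (wd (Wneg i)) (D j)) (wd (Wpos k))))
      \<and> (wd (Gw n) = sc (q powi (- 2 * int n)) (D n)
           + (\<Sum>(i, j, k)\<in>{(i, j, k). i + j + k + 1 = n}.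
                            qstar q (qstar q (wd (Wpos k)) (D j)) (wd (Wneg i))))"
proof -
  interpret Gt_inverse q D
    using q_nz qconv_Gtseq_eq_delta[OF D0 Drec] by unfold_locales
  have A: "wd (Gw n) = dilate (q^2) D n + sc (q^2) (shift_seq (qconv q (qconv q Wnegseq D) Wposseq) n)"
    using fun_cong[OF Gseq_eq_G_via_Wneg_D_Wpos, of n] by (simp only: Gseq_def G_via_Wneg_D_Wpos_def)
  have B: "wd (Gw n) = dilate (inverse (q^2)) D n + shift_seq (qconv q (qconv q Wposseq D) Wnegseq) n"
    using fun_cong[OF Gseq_eq_G_via_Wpos_D_Wneg, of n] by (simp only: Gseq_def G_via_Wpos_D_Wneg_def)
  have sum_A: "shift_seq (qconv q (qconv q Wnegseq D) Wposseq) n =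
      (\<Sum>(i, j, k)\<in>{(i, j, k). i + j + k + 1 = n}. qstar q (qstar q (wd (Wneg i)) (D j)) (wd (Wpos k)))"
    by (simp only: shift_seq_qconv_qconv Wnegseq_def Wposseq_def)
  have sum_B: "shift_seq (qconv q (qconv q Wposseq D) Wnegseq) n =
      (\<Sum>(i, j, k)\<in>{(i, j, k). i + j + k + 1 = n}. qstar q (qstar q (wd (Wpos k)) (D j)) (wd (Wneg i)))"
    unfolding shift_seq_qconv_qconv Wnegseq_def Wposseq_def by (rule sum_triples_reverse[symmetric])
  have "q powi (- 2 * int n) = inverse (q ^ (2 * n))"
    by (simp add: power_int_minus flip: power_int_of_nat)
  then have "q powi (- 2 * int n) = inverse (q ^ 2) ^ n"
    by (simp add: power_mult power_inverse)
  then show ?thesis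
    using A B unfolding sum_A sum_B dilate_def by (simp add: power_mult)
qed

end
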